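(* Let $G=(V,E)$ be a claw-free graph, let $v\in V$ and let $k$ be a positive integer. There exists an independent dominating set of $G$ of size at most $k$ containing $v$ if and only if there exists an independent dominating set of size at most $k-1$ in the induced subgraph $G[V\setminus N[v]]$.
   Context: Graphs are finite, simple, undirected; a graph is claw-free if it has no induced $K_{1,3}$. $N[v]$ is the closed neighbourhood of $v$. An independent dominating set is a set $S$ of pairwise non-adjacent vertices such that every vertex outside $S$ has a neighbour in $S$. *)

theory Defs
  imports Main
begin

definition simple_graph :: "'a set \<Rightarrow> ('a \<Rightarrow> 'a \<Rightarrow> bool) \<Rightarrow> bool" where
  "simple_graph V E \<longleftrightarrow> finite V \<and> (\<forall>x y. E x y \<longrightarrow> x \<in> V \<and> y \<in> V)
     \<and> (\<forall>x y. E x y \<longrightarrow> E y x) \<and> (\<forall>x. \<not> E x x)"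

definition claw_free :: "'a set \<Rightarrow> ('a \<Rightarrow> 'a \<Rightarrow> bool) \<Rightarrow> bool" where
  "claw_free V E \<longleftrightarrow> \<not> (\<exists>c\<in>V. \<exists>a\<in>V. \<exists>b\<in>V. \<exists>d\<in>V.
      E c a \<and> E c b \<and> E c d \<and> a \<noteq> b \<and> a \<noteq> d \<and> b \<noteq> d
      \<and> \<not> E a b \<and> \<not> E a d \<and> \<not> E b d)"

definition closed_nbhd :: "'a set \<Rightarrow> ('a \<Rightarrow> 'a \<Rightarrow> bool) \<Rightarrow> 'a \<Rightarrow> 'a set" where
  "closed_nbhd V E v = {u \<in> V. u = v \<or> E v u}"

definition induced_adj :: "('a \<Rightarrow> 'a \<Rightarrow> bool) \<Rightarrow> 'a set \<Rightarrow> 'a \<Rightarrow> 'a \<Rightarrow> bool" where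
  "induced_adj E W x y \<longleftrightarrow> x \<in> W \<and> y \<in> W \<and> E x y"

definition independent_dominating_set :: "'a set \<Rightarrow> ('a \<Rightarrow> 'a \<Rightarrow> bool) \<Rightarrow> 'a set \<Rightarrow> bool" where
  "independent_dominating_set V E S \<longleftrightarrow> S \<subseteq> V
     \<and> (\<forall>x\<in>S. \<forall>y\<in>S. \<not> E x y)
     \<and> (\<forall>x\<in>V - S. \<exists>y\<in>S. E x y)"

end

theory Submission
  imports Defs
begin

text \<open>Removing \<open>v\<close> from an independent dominating set \<open>S\<close> containing it leaves an independent
dominating set of \<open>G[V - N[v]]\<close>, and conversely adding \<open>v\<close> to one of \<open>G[V - N[v]]\<close> gives one of \<open>G\<close>
containing \<open>v\<close>; the two operations change the size by exactly one.\<close>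

lemma independent_dominating_set_remove_vertex:
  assumes "simple_graph V E" and "independent_dominating_set V E S" and "v \<in> S"
  defines "W \<equiv> V - closed_nbhd V E v"
  shows "independent_dominating_set W (induced_adj E W) (S - {v})"
proof -
  have sym: "\<And>x y. E x y \<Longrightarrow> E y x"
    using assms(1) unfolding simple_graph_def by blast
  have sub: "S - {v} \<subseteq> W"
    using assms(2,3) unfolding W_def independent_dominating_set_def closed_nbhd_def by auto
  have dominated: "\<exists>y\<in>S - {v}. induced_adj E W x y" if x: "x \<in> W - (S - {v})" for x
  proof -
    from x have "x \<in> V - S" "\<not> E v x"
      unfolding W_def closed_nbhd_def by auto
    then obtain y where y: "y \<in> S" "E x y"
      using assms(2) unfolding independent_dominating_set_def by blast
    have "y \<noteq> v" using y(2) \<open>\<not> E v x\<close> sym by blast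
    with x y sub show ?thesis
      unfolding induced_adj_def by auto
  qed
  have "\<forall>x\<in>S - {v}. \<forall>y\<in>S - {v}. \<not> induced_adj E W x y"
    using assms(2) unfolding independent_dominating_set_def induced_adj_def by blast
  with sub dominated show ?thesis
    unfolding independent_dominating_set_def by blast
qed

lemma independent_dominating_set_insert_vertex:
  assumes "simple_graph V E" and "v \<in> V"
  defines "W \<equiv> V - closed_nbhd V E v"
  assumes "independent_dominating_set W (induced_adj E W) T"
  shows "independent_dominating_set V E (insert v T)"
proof -
  have sym: "\<And>x y. E x y \<Longrightarrow> E y x" and irrefl: "\<And>x. \<not> E x x"
    and edge_in_V: "\<And>x y. E x y \<Longrightarrow> x \<in> V \<and> y \<in> V"
    using assms(1) unfolding simple_graph_def by blast+
  have TW: "T \<subseteq> W"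
    using assms(4) unfolding independent_dominating_set_def by blast
  have v_T: "\<not> E v y" if "y \<in> T" for y
    using that TW edge_in_V unfolding W_def closed_nbhd_def by blast
  have T_indep: "\<not> E x y" if "x \<in> T" "y \<in> T" for x y
    using that TW assms(4) unfolding independent_dominating_set_def induced_adj_def by blast
  have dominated: "\<exists>y\<in>insert v T. E x y" if x: "x \<in> V - insert v T" for x
  proof (cases "x \<in> closed_nbhd V E v")
    case True
    with x sym show ?thesis unfolding closed_nbhd_def by auto
  next
    case False
    with x have "x \<in> W - T" unfolding W_def by blast
    then show ?thesis
      using assms(4) unfolding independent_dominating_set_def induced_adj_def by blast
  qed
  have "insert v T \<subseteq> V"
    using TW assms(2) unfolding W_def by blast
  moreover have "\<forall>x\<in>insert v T. \<forall>y\<in>insert v T. \<not> E x y"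
    using v_T T_indep sym irrefl by blast
  ultimately show ?thesis
    using dominated unfolding independent_dominating_set_def by blast
qed

theorem lemma2:
  fixes V :: "'a set" and E :: "'a \<Rightarrow> 'a \<Rightarrow> bool" and v :: 'a and k :: nat
  assumes "simple_graph V E" and "claw_free V E" and "v \<in> V" and "k \<ge> 1"
  shows "(\<exists>S. independent_dominating_set V E S \<and> card S \<le> k \<and> v \<in> S)
     \<longleftrightarrow> (\<exists>T. independent_dominating_set (V - closed_nbhd V E v)
                  (induced_adj E (V - closed_nbhd V E v)) T \<and> card T \<le> k - 1)"
proof
  have fin: "finite V"
    using assms(1) unfolding simple_graph_def by blast
  let ?W = "V - closed_nbhd V E v"
  show "\<exists>T. independent_dominating_set ?W (induced_adj E ?W) T \<and> card T \<le> k - 1"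
    if "\<exists>S. independent_dominating_set V E S \<and> card S \<le> k \<and> v \<in> S"
  proof -
    from that obtain S where S: "independent_dominating_set V E S" "card S \<le> k" "v \<in> S"
      by blast
    have "finite S"
      using S(1) fin finite_subset unfolding independent_dominating_set_def by blast
    then have "card (S - {v}) \<le> k - 1"
      using S(2,3) by (simp add: card_Diff_singleton)
    with independent_dominating_set_remove_vertex[OF assms(1) S(1,3)] show ?thesis by blast
  qed
  show "\<exists>S. independent_dominating_set V E S \<and> card S \<le> k \<and> v \<in> S"
    if "\<exists>T. independent_dominating_set ?W (induced_adj E ?W) T \<and> card T \<le> k - 1"
  proof -
    from that obtain T where T: "independent_dominating_set ?W (induced_adj E ?W) T" "card T \<le> k - 1"
      by blast
    have "card (insert v T) \<le> k"
      using card_insert_le_m1[OF _ T(2)] assms(4) by simp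
    with independent_dominating_set_insert_vertex[OF assms(1,3) T(1)] show ?thesis by blast
  qed
qed

end
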